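(* Let $\gamma\in\mathbb{R}\setminus\{0,1\}$, $\epsilon\in\mathbb{R}$, and set $\nu=\frac{\gamma-2}{\gamma-1}$, assumed not to be an integer. Let $\mathfrak g$ be a real Lie algebra and let $L\in\mathfrak g$ and $a_k,b_k\in\mathfrak g$ ($k=0,1,2,\dots$) satisfy: (a) $k\,\frac{\gamma-1}{\gamma}\,b_k+[a_{k-1},L]=0$ for all $k\ge1$; (b) the identity \[ \frac{\gamma-1}{\gamma}\sum_{k\ge1}k\,a_k\,z^{k-1+\nu}=\epsilon L+\sum_{k\ge0}[L,b_k]\,z^{k}, \] understood as an identity of formal sums of real powers of $z$ with $\mathfrak g$-valued coefficients (coefficients of each exponent compared separately); (c) $\sum_{k=1}^{N}[a_{k-1},b_{N-k}]=0$ for all $N\ge1$. Then \[ [a_0,b_0]=[a_0,b_1]=[L,b_1]=0,\qquad [b_0,b_1]=\epsilon b_1,\qquad [b_0,L]=\epsilon L,\qquad [a_0,L]=\frac{1}{\nu-2}\,b_1 . \] In particular, for $\epsilon\neq0$ these are the relations of the Lie algebra $\mathcal L$, and for $\epsilon=0$ they reduce to $[a_0,b_0]=[a_0,b_1]=[L,b_1]=[b_0,b_1]=[b_0,L]=0$, $[a_0,L]=\frac{1}{\nu-2}b_1$ (the Lie algebra $\mathcal L'$).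
   Context: These conditions arise from the prolongation equations $\frac{\gamma-1}{\gamma}P_z+[M,L]=0$, $\frac{\gamma-1}{\gamma}z^{\frac{\gamma-2}{\gamma-1}}M_z=\epsilon L+[L,P]$, $[M,P]=0$ for the equation $u_{tt}+\epsilon u_t=[(1+u/\gamma)^{\gamma-1}]_{xx}$, with $z=(1+u/\gamma)^{\gamma-1}$ and the ansatz $M=\sum_{k\ge0}a_k z^k$, $P=\sum_{k\ge0}b_k z^k$, where $L,a_k,b_k$ are (e.g.) vector fields in the pseudopotential variables. *)

theory Defs
  imports Complex_Main
begin

definition lie_algebra :: "('a::real_vector \<Rightarrow> 'a \<Rightarrow> 'a) \<Rightarrow> bool" where
  "lie_algebra br \<longleftrightarrow>
     (\<forall>x y z. br (x + y) z = br x z + br y z) \<and>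
     (\<forall>x y z. br x (y + z) = br x y + br x z) \<and>
     (\<forall>c x y. br (c *\<^sub>R x) y = c *\<^sub>R br x y) \<and>
     (\<forall>c x y. br x (c *\<^sub>R y) = c *\<^sub>R br x y) \<and>
     (\<forall>x. br x x = 0) \<and>
     (\<forall>x y z. br x (br y z) + br y (br z x) + br z (br x y) = 0)"

text \<open>A formal sum \<open>\<Sum>k\<in>I. c k z^(e k)\<close> of real powers of \<open>z\<close> is represented by
  its coefficient function: the coefficient of \<open>z^r\<close> is the sum of all \<open>c k\<close>
  with \<open>k \<in> I\<close> and \<open>e k = r\<close>.\<close>
definition formal_coeff :: "nat set \<Rightarrow> (nat \<Rightarrow> real) \<Rightarrow> (nat \<Rightarrow> 'a::real_vector) \<Rightarrow> real \<Rightarrow> 'a" where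
  "formal_coeff I e c r = (\<Sum>k\<in>{k\<in>I. e k = r}. c k)"

end

theory Submission
  imports Defs
begin

text \<open>Since \<open>\<nu>\<close> is not an integer, the exponents \<open>k - 1 + \<nu>\<close> on the left of identity (b)
  never meet the integer exponents on the right. Comparing coefficients at \<open>z\<^sup>n\<close> gives
  \<open>[L, b\<^sub>0] = -\<epsilon> L\<close> and \<open>[L, b\<^sub>n] = 0\<close> for \<open>n \<ge> 1\<close>; at \<open>z\<^sup>\<nu>\<close> it gives \<open>a\<^sub>1 = 0\<close>.
  Then (a) with \<open>k = 1\<close> expresses \<open>[a\<^sub>0, L]\<close> as a multiple of \<open>b\<^sub>1\<close>, (c) with \<open>N = 1, 2\<close>
  says that \<open>a\<^sub>0\<close> commutes with \<open>b\<^sub>0\<close> and \<open>b\<^sub>1\<close>, and the Jacobi identity shows that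
  \<open>ad b\<^sub>0\<close> maps \<open>[a\<^sub>0, L]\<close>, hence \<open>b\<^sub>1\<close>, to \<open>\<epsilon>\<close> times itself.\<close>

lemma lie_algebra_bracket_antisym:
  assumes "lie_algebra br"
  shows "br y x = - br x y"
proof -
  have add_left: "br (x + y) z = br x z + br y z"
    and add_right: "br x (y + z) = br x y + br x z"
    and alternating: "br x x = 0" for x y z
    using assms unfolding lie_algebra_def by auto
  have "0 = br (x + y) (x + y)" by (simp add: alternating)
  also have "\<dots> = br x y + br y x" by (simp only: add_left add_right) (simp add: alternating)
  finally show ?thesis by (metis add_eq_0_iff)
qed

lemma lie_algebra_bracket_scaleR_right:
  "lie_algebra br \<Longrightarrow> br x (c *\<^sub>R y) = c *\<^sub>R br x y"
  unfolding lie_algebra_def by blast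

lemma lie_algebra_bracket_zero_right: "lie_algebra br \<Longrightarrow> br x 0 = 0"
  using lie_algebra_bracket_scaleR_right[of br x 0 0] by simp

lemma lie_algebra_bracket_zero_left: "lie_algebra br \<Longrightarrow> br 0 x = 0"
  by (metis lie_algebra_bracket_antisym lie_algebra_bracket_zero_right neg_equal_0_iff_equal)

lemma lie_algebra_jacobi:
  "lie_algebra br \<Longrightarrow> br x (br y z) + br y (br z x) + br z (br x y) = 0"
  unfolding lie_algebra_def by blast

lemma lie_algebra_bracket_eigenvector:
  assumes lie: "lie_algebra br"
    and hx: "br h x = 0" and hy: "br h y = \<epsilon> *\<^sub>R y"
  shows "br h (br x y) = \<epsilon> *\<^sub>R br x y"
proof -
  have "br y h = (- \<epsilon>) *\<^sub>R y"
    using lie_algebra_bracket_antisym[OF lie, of y h] hy by simp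
  then have "br x (br y h) = (- \<epsilon>) *\<^sub>R br x y"
    by (simp only: lie_algebra_bracket_scaleR_right[OF lie])
  moreover have "br y (br h x) = 0"
    by (simp add: hx lie_algebra_bracket_zero_right[OF lie])
  ultimately show ?thesis
    using lie_algebra_jacobi[OF lie, of h x y] by (simp add: algebra_simps)
qed

lemma formal_coeff_eq_0:
  "r \<notin> e ` I \<Longrightarrow> formal_coeff I e c r = 0"
  unfolding formal_coeff_def by (metis (mono_tags, lifting) empty_Collect_eq image_eqI sum.empty)

lemma formal_coeff_inj_on:
  assumes "inj_on e I" and "k \<in> I"
  shows "formal_coeff I e c (e k) = c k"
proof -
  have "{j \<in> I. e j = e k} = {k}"
    using assms by (auto dest: inj_onD)
  then show ?thesis by (simp add: formal_coeff_def)
qed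

lemma shifted_exponent_neq_nat:
  fixes \<nu> :: real
  assumes "\<nu> \<notin> \<int>"
  shows "real m - 1 + \<nu> \<noteq> real n"
proof
  assume "real m - 1 + \<nu> = real n"
  then have "\<nu> = of_int (int n - int m + 1)" by simp
  with assms show False by (metis Ints_of_int)
qed

lemma formal_identity_coeff_nat:
  fixes \<nu> :: real
  assumes "\<nu> \<notin> \<int>"
    and identity: "\<And>r. c *\<^sub>R formal_coeff {1..} (\<lambda>k. real k - 1 + \<nu>) p r
                    = (if r = 0 then u else 0) + formal_coeff UNIV (\<lambda>k. real k) q r"
  shows "(if n = 0 then u else 0) + q n = 0"
proof -
  have "formal_coeff {1..} (\<lambda>k. real k - 1 + \<nu>) p (real n) = 0"
    using shifted_exponent_neq_nat[OF assms(1)] by (intro formal_coeff_eq_0) (auto dest: sym)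
  moreover have "formal_coeff UNIV (\<lambda>k. real k) q (real n) = q n"
    using formal_coeff_inj_on[of "\<lambda>k. real k" UNIV n q] by (simp add: inj_on_def)
  ultimately show ?thesis
    using identity[of "real n"] by simp
qed

lemma formal_identity_coeff_nu:
  fixes \<nu> :: real
  assumes "\<nu> \<notin> \<int>"
    and identity: "\<And>r. c *\<^sub>R formal_coeff {1..} (\<lambda>k. real k - 1 + \<nu>) p r
                    = (if r = 0 then u else 0) + formal_coeff UNIV (\<lambda>k. real k) q r"
  shows "c *\<^sub>R p 1 = 0"
proof -
  have "formal_coeff {1..} (\<lambda>k. real k - 1 + \<nu>) p \<nu> = p 1"
    using formal_coeff_inj_on[of "\<lambda>k. real k - 1 + \<nu>" "{1..}" 1 p] by (simp add: inj_on_def)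
  moreover have "\<nu> \<noteq> 0"
    using shifted_exponent_neq_nat[OF assms(1), of 1 0] by simp
  moreover have "formal_coeff UNIV (\<lambda>k. real k) q \<nu> = 0"
    using shifted_exponent_neq_nat[OF assms(1), of 1] by (intro formal_coeff_eq_0) auto
  ultimately show ?thesis
    using identity[of \<nu>] by simp
qed

theorem proposition4:
  fixes br :: "'g::real_vector \<Rightarrow> 'g \<Rightarrow> 'g"
    and \<gamma> \<epsilon> \<nu> :: real
    and L :: 'g and a b :: "nat \<Rightarrow> 'g"
  assumes lie: "lie_algebra br"
    and g0: "\<gamma> \<noteq> 0" and g1: "\<gamma> \<noteq> 1"
    and nu: "\<nu> = (\<gamma> - 2) / (\<gamma> - 1)"
    and nu_nonint: "\<nu> \<notin> \<int>"
    and A: "\<And>k. k \<ge> 1 \<Longrightarrow>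
              (real k * ((\<gamma> - 1) / \<gamma>)) *\<^sub>R b k + br (a (k - 1)) L = 0"
    and B: "\<And>r::real.
              ((\<gamma> - 1) / \<gamma>) *\<^sub>R
                formal_coeff {1..} (\<lambda>k. real k - 1 + \<nu>) (\<lambda>k. real k *\<^sub>R a k) r
              = (if r = 0 then \<epsilon> *\<^sub>R L else 0)
                + formal_coeff UNIV (\<lambda>k. real k) (\<lambda>k. br L (b k)) r"
    and C: "\<And>N. N \<ge> 1 \<Longrightarrow> (\<Sum>k=1..N. br (a (k - 1)) (b (N - k))) = 0"
  shows "br (a 0) (b 0) = 0 \<and> br (a 0) (b 1) = 0 \<and> br L (b 1) = 0 \<and>
         br (b 0) (b 1) = \<epsilon> *\<^sub>R b 1 \<and> br (b 0) L = \<epsilon> *\<^sub>R L \<and>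
         br (a 0) L = (1 / (\<nu> - 2)) *\<^sub>R b 1"
proof -
  define c where "c = (\<gamma> - 1) / \<gamma>"
  have "c \<noteq> 0" using g0 g1 by (simp add: c_def)
  have nu_minus_2: "1 / (\<nu> - 2) = - c"
    using g0 g1 unfolding nu c_def by (simp add: field_simps)
  have L_b0: "br L (b 0) = - (\<epsilon> *\<^sub>R L)" and L_b1: "br L (b 1) = 0"
    using formal_identity_coeff_nat[OF nu_nonint B, of 0]
      formal_identity_coeff_nat[OF nu_nonint B, of 1]
    by (simp_all add: eq_neg_iff_add_eq_0 add.commute)
  have "a 1 = 0"
    using formal_identity_coeff_nu[OF nu_nonint B] g0 g1 by simp
  have a0_L: "br (a 0) L = (- c) *\<^sub>R b 1"
    using A[of 1] by (simp add: c_def eq_neg_iff_add_eq_0 add.commute)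
  have a0_b0: "br (a 0) (b 0) = 0" using C[of 1] by simp
  have a0_b1: "br (a 0) (b 1) = 0"
    using C[of 2] \<open>a 1 = 0\<close> lie_algebra_bracket_zero_left[OF lie] by (simp add: numeral_2_eq_2)
  have b0_L: "br (b 0) L = \<epsilon> *\<^sub>R L"
    by (simp add: lie_algebra_bracket_antisym[OF lie, of "b 0" L] L_b0)
  have b0_a0: "br (b 0) (a 0) = 0"
    by (simp add: lie_algebra_bracket_antisym[OF lie, of "b 0" "a 0"] a0_b0)
  have "br (b 0) (br (a 0) L) = \<epsilon> *\<^sub>R br (a 0) L"
    by (rule lie_algebra_bracket_eigenvector[OF lie b0_a0 b0_L])
  then have "(- c) *\<^sub>R br (b 0) (b 1) = (- c) *\<^sub>R (\<epsilon> *\<^sub>R b 1)"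
    by (simp only: a0_L lie_algebra_bracket_scaleR_right[OF lie] scaleR_left_commute)
  then have "br (b 0) (b 1) = \<epsilon> *\<^sub>R b 1"
    using \<open>c \<noteq> 0\<close> by (metis neg_equal_0_iff_equal scaleR_cancel_left)
  then show ?thesis using a0_b0 a0_b1 L_b1 b0_L a0_L nu_minus_2 by simp
qed

end
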